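(* Let $A$ be a rational matrix. Then $A$ is totally equimodular if and only if every matrix obtained from $A$ by a finite (possibly empty) sequence of pivots and trims is essentially $0,\pm1$.
   Context: An $m\times n$ matrix is equimodular if it has full row rank $m$ and all its nonzero $m\times m$ minors have the same absolute value. A matrix is totally equimodular if every set of linearly independent rows of it forms an equimodular matrix. A pivot of a matrix $A$ is a position $p=(i,j)$ with $A_i^j\neq 0$. The $p$-pivot $A/p$ is obtained from $A$ by dividing row $i$ by $A_i^j$ and then adding suitable multiples of this new row to the other rows so that column $j$ becomes the $i$-th unit vector. The $p$-trim $A/\!\!/p$ is obtained from $A/p$ by deleting row $i$ and column $j$. A matrix is essentially $0,\pm1$ if, in each row, all nonzero entries have the same absolute value. *)

theory Defs
  imports "Jordan_Normal_Form.DL_Rank" "Jordan_Normal_Form.DL_Submatrix"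
begin

text \<open>Matrices are Jordan_Normal_Form matrices; indices are 0-based.
  The rank is the library rank (dimension of the column space).\<close>

definition full_row_rank :: "'a::field mat \<Rightarrow> bool" where
  "full_row_rank A \<longleftrightarrow> vec_space.rank (dim_row A) A = dim_row A"

definition equimodular :: "'a::linordered_field mat \<Rightarrow> bool" where
  "equimodular A \<longleftrightarrow> full_row_rank A \<and>
     (\<forall>J K. J \<subseteq> {..<dim_col A} \<longrightarrow> K \<subseteq> {..<dim_col A} \<longrightarrow>
        card J = dim_row A \<longrightarrow> card K = dim_row A \<longrightarrow>
        det (submatrix A UNIV J) \<noteq> 0 \<longrightarrow> det (submatrix A UNIV K) \<noteq> 0 \<longrightarrow>
        \<bar>det (submatrix A UNIV J)\<bar> = \<bar>det (submatrix A UNIV K)\<bar>)"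

text \<open>A set I of row indices is linearly independent iff the matrix formed by
  these rows has full row rank.\<close>
definition totally_equimodular :: "'a::linordered_field mat \<Rightarrow> bool" where
  "totally_equimodular A \<longleftrightarrow>
     (\<forall>I. I \<subseteq> {..<dim_row A} \<longrightarrow> full_row_rank (submatrix A I UNIV) \<longrightarrow>
          equimodular (submatrix A I UNIV))"

definition is_pivot :: "'a::field mat \<Rightarrow> nat \<Rightarrow> nat \<Rightarrow> bool" where
  "is_pivot A i j \<longleftrightarrow> i < dim_row A \<and> j < dim_col A \<and> A $$ (i, j) \<noteq> 0"

definition pivot_mat :: "'a::field mat \<Rightarrow> nat \<Rightarrow> nat \<Rightarrow> 'a mat" where
  "pivot_mat A i j = mat (dim_row A) (dim_col A) (\<lambda>(k, l).
      if k = i then A $$ (i, l) / A $$ (i, j)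
      else A $$ (k, l) - A $$ (k, j) * (A $$ (i, l) / A $$ (i, j)))"

definition trim_mat :: "'a::field mat \<Rightarrow> nat \<Rightarrow> nat \<Rightarrow> 'a mat" where
  "trim_mat A i j = submatrix (pivot_mat A i j) (- {i}) (- {j})"

definition pivot_trim_step :: "'a::field mat \<Rightarrow> 'a mat \<Rightarrow> bool" where
  "pivot_trim_step A B \<longleftrightarrow>
     (\<exists>i j. is_pivot A i j \<and> (B = pivot_mat A i j \<or> B = trim_mat A i j))"

definition essentially_01 :: "'a::linordered_field mat \<Rightarrow> bool" where
  "essentially_01 A \<longleftrightarrow>
     (\<forall>i < dim_row A. \<forall>j < dim_col A. \<forall>k < dim_col A.
        A $$ (i, j) \<noteq> 0 \<longrightarrow> A $$ (i, k) \<noteq> 0 \<longrightarrow> \<bar>A $$ (i, j)\<bar> = \<bar>A $$ (i, k)\<bar>)"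

end

theory Submission
  imports Defs "Jordan_Normal_Form.DL_Rank_Submatrix"
begin

(* Total equimodularity amounts to: for every set I of rows, all nonzero square minors with row
   set I have the same absolute value.  A pivot at (i,j) divides every minor through row i by
   A_ij, and by Laplace expansion along the unit column j every minor of the pivoted matrix
   avoiding row i equals, up to sign, one through row i and column j; hence the property survives pivots and trims, and on 1x1
   minors it says that the matrix is essentially 0,+-1.
   Conversely, induct on |I|.  Two nonzero minors on rows I sharing a column j are compared by
   pivoting on a nonzero entry (i,j) and trimming, which divides both by |A_ij| and removes a
   row.  Two column-disjoint ones are linked by a third nonzero minor that shares a column with
   each; it exists by the exchange property of bases, again proved by pivoting. *)

lemma strict_mono_on_pick: "strict_mono_on {..<card S} (pick S)"
  by (rule strict_mono_onI) (simp add: pick_mono_le)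

lemma inj_on_pick: "inj_on (pick S) {..<card S}"
  using strict_mono_on_pick strict_mono_on_imp_inj_on by blast

lemma pick_image_strict_mono:
  assumes "strict_mono_on S (f :: nat \<Rightarrow> nat)" "n < card S"
  shows "pick (f ` S) n = f (pick S n)"
proof -
  define x where "x = pick S n"
  have x: "x \<in> S" "card {a\<in>S. a < x} = n"
    using pick_in_set_le[OF assms(2)] card_pick_le[OF assms(2)] x_def by auto
  have inj: "inj_on f S" using assms(1) strict_mono_on_imp_inj_on by blast
  have "f a < f x \<longleftrightarrow> a < x" if "a \<in> S" for a
  proof
    assume "a < x" then show "f a < f x" using x(1) that assms(1) by (simp add: strict_mono_onD)
  next
    assume "f a < f x"
    show "a < x"
    proof (rule ccontr)
      assume "\<not> a < x"
      then have "x \<le> a" by simp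
      then have "f x \<le> f a" using x(1) that assms(1) strict_mono_on_leD by blast
      then show False using \<open>f a < f x\<close> by simp
    qed
  qed
  then have "{b\<in>f ` S. b < f x} = f ` {a\<in>S. a < x}" by auto
  then have "card {b\<in>f ` S. b < f x} = n"
    using x(2) card_image[OF inj_on_subset[OF inj]] by (metis (no_types, lifting) mem_Collect_eq subsetI)
  then show ?thesis using pick_card_in_set[of "f x" "f ` S"] x(1) x_def by auto
qed

lemma image_pick_lessThan:
  assumes "finite S"
  shows "pick S ` {..<card S} = S"
proof
  show "pick S ` {..<card S} \<subseteq> S" using pick_in_set_le by blast
  show "S \<subseteq> pick S ` {..<card S}"
  proof
    fix x assume "x \<in> S"
    then have "{a\<in>S. a < x} \<subset> S" by auto
    then have "card {a\<in>S. a < x} < card S" using assms psubset_card_mono by blast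
    show "x \<in> pick S ` {..<card S}"
    proof (rule image_eqI)
      show "x = pick S (card {a\<in>S. a < x})" using pick_card_in_set[OF \<open>x \<in> S\<close>] by simp
    qed (use \<open>card {a\<in>S. a < x} < card S\<close> in simp)
  qed
qed

lemma pick_lessThan:
  assumes "r < n"
  shows "pick {..<n} r = r"
proof -
  have "{a\<in>{..<n}. a < r} = {..<r}" using assms by auto
  then show ?thesis using pick_card_in_set[of r "{..<n}"] assms by simp
qed

lemma card_less_in_set:
  fixes I :: "nat set"
  assumes "finite I" "i \<in> I"
  shows "card {a\<in>I. a < i} < card I"
proof -
  have "i \<notin> {a\<in>I. a < i}" by simp
  then have "{a\<in>I. a < i} \<subset> I" using assms(2) by blast
  then show ?thesis using assms psubset_card_mono by blast
qed

lemma submatrix_altdef: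
  assumes "I \<subseteq> {..<dim_row A}" "K \<subseteq> {..<dim_col A}"
  shows "submatrix A I K = mat (card I) (card K) (\<lambda>(r, c). A $$ (pick I r, pick K c))"
proof -
  have "{i. i < dim_row A \<and> i \<in> I} = I" "{j. j < dim_col A \<and> j \<in> K} = K" using assms by auto
  then show ?thesis unfolding submatrix_def by simp
qed

lemma submatrix_carrier:
  assumes "I \<subseteq> {..<dim_row A}" "K \<subseteq> {..<dim_col A}"
  shows "submatrix A I K \<in> carrier_mat (card I) (card K)"
  using submatrix_altdef[OF assms] by simp

lemma submatrix_restrict:
  "submatrix A I K = submatrix A {i. i < dim_row A \<and> i \<in> I} {j. j < dim_col A \<and> j \<in> K}"
proof (rule eq_matI)
  fix r c
  assume "r < dim_row (submatrix A {i. i < dim_row A \<and> i \<in> I} {j. j < dim_col A \<and> j \<in> K})"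
    and "c < dim_col (submatrix A {i. i < dim_row A \<and> i \<in> I} {j. j < dim_col A \<and> j \<in> K})"
  then have rc: "r < card {i. i < dim_row A \<and> i \<in> I}" "c < card {j. j < dim_col A \<and> j \<in> K}"
    by (simp_all add: dim_submatrix)
  show "submatrix A I K $$ (r, c) =
      submatrix A {i. i < dim_row A \<and> i \<in> I} {j. j < dim_col A \<and> j \<in> K} $$ (r, c)"
    using rc by (simp add: submatrix_def pick_reduce_set[OF rc(1)] pick_reduce_set[OF rc(2)])
qed (simp_all add: dim_submatrix)

lemma submatrix_submatrix:
  assumes I: "I \<subseteq> {..<dim_row A}" and K: "K \<subseteq> {..<dim_col A}"
    and I': "I' \<subseteq> {..<card I}" and K': "K' \<subseteq> {..<card K}"
  shows "submatrix (submatrix A I K) I' K' = submatrix A (pick I ` I') (pick K ` K')"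
proof -
  have mono: "strict_mono_on I' (pick I)" "strict_mono_on K' (pick K)"
    using strict_mono_on_pick I' K' monotone_on_subset by blast+
  have sub: "pick I ` I' \<subseteq> {..<dim_row A}" "pick K ` K' \<subseteq> {..<dim_col A}"
    using I K I' K' pick_in_set_le by fastforce+
  have card: "card (pick I ` I') = card I'" "card (pick K ` K') = card K'"
    using card_image mono strict_mono_on_imp_inj_on by blast+
  have sub': "I' \<subseteq> {..<dim_row (submatrix A I K)}" "K' \<subseteq> {..<dim_col (submatrix A I K)}"
    using submatrix_carrier[OF I K] I' K' by auto
  show ?thesis
    unfolding submatrix_altdef[OF sub] card submatrix_altdef[OF sub']
  proof (rule eq_matI)
    fix r c assume "r < dim_row (mat (card I') (card K') (\<lambda>(r, c). A $$ (pick (pick I ` I') r, pick (pick K ` K') c)))"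
      "c < dim_col (mat (card I') (card K') (\<lambda>(r, c). A $$ (pick (pick I ` I') r, pick (pick K ` K') c)))"
    then have rc: "r < card I'" "c < card K'" by auto
    have "pick I' r < card I" "pick K' c < card K"
      using pick_in_set_le[OF rc(1)] pick_in_set_le[OF rc(2)] I' K' by auto
    then show "mat (card I') (card K') (\<lambda>(r, c). submatrix A I K $$ (pick I' r, pick K' c)) $$ (r, c) =
         mat (card I') (card K') (\<lambda>(r, c). A $$ (pick (pick I ` I') r, pick (pick K ` K') c)) $$ (r, c)"
      using rc by (simp add: submatrix_altdef[OF I K] pick_image_strict_mono[OF mono(1) rc(1)]
          pick_image_strict_mono[OF mono(2) rc(2)])
  qed auto
qed

lemma dim_submatrix_rows:
  assumes "I \<subseteq> {..<dim_row A}"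
  shows "dim_row (submatrix A I UNIV) = card I" "dim_col (submatrix A I UNIV) = dim_col A"
proof -
  have "{i. i < dim_row A \<and> i \<in> I} = I" using assms by auto
  then show "dim_row (submatrix A I UNIV) = card I" by (simp only: dim_submatrix)
  show "dim_col (submatrix A I UNIV) = dim_col A" by (simp add: dim_submatrix)
qed

lemma submatrix_rows_cols:
  assumes I: "I \<subseteq> {..<dim_row A}" and K: "K \<subseteq> {..<dim_col A}"
  shows "submatrix (submatrix A I UNIV) UNIV K = submatrix A I K"
proof -
  let ?C = "submatrix A I {..<dim_col A}"
  have "{i. i < dim_row A \<and> i \<in> I} = I" "{j. j < dim_col A \<and> j \<in> UNIV} = {..<dim_col A}"
    using I by auto
  then have rows: "submatrix A I UNIV = ?C" using submatrix_restrict[of A I UNIV] by (simp only:)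
  have "{i. i < dim_row ?C \<and> i \<in> UNIV} = {..<card I}" "{j. j < dim_col ?C \<and> j \<in> K} = K"
    using K submatrix_carrier[OF I, of "{..<dim_col A}"] by auto
  then have "submatrix ?C UNIV K = submatrix ?C {..<card I} K"
    using submatrix_restrict[of ?C UNIV K] by (simp only:)
  also have "\<dots> = submatrix A (pick I ` {..<card I}) (pick {..<dim_col A} ` K)"
    by (rule submatrix_submatrix[OF I]) (use K in auto)
  also have "pick I ` {..<card I} = I"
    using image_pick_lessThan finite_subset[OF I finite_lessThan] by blast
  also have "pick {..<dim_col A} ` K = K"
  proof -
    have "pick {..<dim_col A} ` K = (\<lambda>x. x) ` K" using K pick_lessThan by (intro image_cong) auto
    then show ?thesis by simp
  qed
  finally show ?thesis unfolding rows .
qed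

lemma insert_index_image:
  assumes "s < m"
  shows "(\<lambda>r. if r < s then r else Suc r) ` {..<m - 1} = {..<m} - {s}"
proof
  show "(\<lambda>r. if r < s then r else Suc r) ` {..<m - 1} \<subseteq> {..<m} - {s}" using assms by auto
  show "{..<m} - {s} \<subseteq> (\<lambda>r. if r < s then r else Suc r) ` {..<m - 1}"
  proof
    fix x assume x: "x \<in> {..<m} - {s}"
    show "x \<in> (\<lambda>r. if r < s then r else Suc r) ` {..<m - 1}"
    proof (cases "x < s")
      case True then show ?thesis using x assms by (intro image_eqI[of _ _ x]) auto
    next
      case False then show ?thesis using x assms by (intro image_eqI[of _ _ "x - 1"]) auto
    qed
  qed
qed

lemma mat_delete_eq_submatrix:
  assumes M: "M \<in> carrier_mat m n" and s: "s < m" and t: "t < n"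
  shows "mat_delete M s t = submatrix M ({..<m} - {s}) ({..<n} - {t})"
proof -
  define f where "f = (\<lambda>r::nat. if r < s then r else Suc r)"
  define g where "g = (\<lambda>r::nat. if r < t then r else Suc r)"
  have fi: "f ` {..<m - 1} = {..<m} - {s}" unfolding f_def by (rule insert_index_image[OF s])
  have gi: "g ` {..<n - 1} = {..<n} - {t}" unfolding g_def by (rule insert_index_image[OF t])
  have fm: "strict_mono_on {..<m - 1} f" unfolding f_def by (rule strict_mono_onI) auto
  have gm: "strict_mono_on {..<n - 1} g" unfolding g_def by (rule strict_mono_onI) auto
  have card: "card ({..<m} - {s}) = m - 1" "card ({..<n} - {t}) = n - 1" using s t by auto
  have pf: "pick ({..<m} - {s}) r = f r" if "r < m - 1" for r
    using pick_image_strict_mono[OF fm, of r] that pick_lessThan[OF that] fi by simp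
  have pg: "pick ({..<n} - {t}) r = g r" if "r < n - 1" for r
    using pick_image_strict_mono[OF gm, of r] that pick_lessThan[OF that] gi by simp
  have "submatrix M ({..<m} - {s}) ({..<n} - {t}) =
      mat (m - 1) (n - 1) (\<lambda>(r, c). M $$ (pick ({..<m} - {s}) r, pick ({..<n} - {t}) c))"
    using submatrix_altdef[of "{..<m} - {s}" M "{..<n} - {t}"] M card by auto
  also have "\<dots> = mat_delete M s t" unfolding mat_delete_def
    by (rule eq_matI) (use M in \<open>auto simp: pf pg f_def g_def\<close>)
  finally show ?thesis by simp
qed

lemma mat_delete_submatrix:
  assumes I: "I \<subseteq> {..<dim_row A}" and K: "K \<subseteq> {..<dim_col A}" and s: "s < card I" and t: "t < card K"
  shows "mat_delete (submatrix A I K) s t = submatrix A (I - {pick I s}) (K - {pick K t})"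
proof -
  have fin: "finite I" "finite K" using I K finite_subset by blast+
  have "mat_delete (submatrix A I K) s t = submatrix (submatrix A I K) ({..<card I} - {s}) ({..<card K} - {t})"
    by (rule mat_delete_eq_submatrix[OF submatrix_carrier[OF I K] s t])
  also have "\<dots> = submatrix A (pick I ` ({..<card I} - {s})) (pick K ` ({..<card K} - {t}))"
    by (rule submatrix_submatrix[OF I K]) auto
  also have "pick I ` ({..<card I} - {s}) = pick I ` {..<card I} - pick I ` {s}"
    using s by (intro inj_on_image_set_diff[OF inj_on_pick]) auto
  also have "pick K ` ({..<card K} - {t}) = pick K ` {..<card K} - pick K ` {t}"
    using t by (intro inj_on_image_set_diff[OF inj_on_pick]) auto
  finally show ?thesis using image_pick_lessThan[OF fin(1)] image_pick_lessThan[OF fin(2)] by simp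
qed

lemma (in vec_space) rank_le_dim_row:
  assumes "A \<in> carrier_mat n nc"
  shows "rank A \<le> n"
proof -
  obtain S where S: "maximal S (\<lambda>T. T \<subseteq> set (cols A) \<and> lin_indpt T)"
    using maximal_exists[of "(\<lambda>T. T \<subseteq> set (cols A) \<and> lin_indpt T)" "card (set (cols A))" "{}"]
    by (meson List.finite_set card_mono empty_iff empty_subsetI finite_lin_indpt2 rev_finite_subset)
  then have "S \<subseteq> set (cols A)" "lin_indpt S" unfolding maximal_def by auto
  moreover have "set (cols A) \<subseteq> carrier_vec n" using assms cols_dim by blast
  ultimately have "card S \<le> dim" using li_le_dim(2)[OF fin_dim] by blast
  then show ?thesis using rank_card_indpt[OF assms S] dim_is_n by simp
qed

lemma full_row_rank_if_det_submatrix_nonzero: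
  fixes C :: "'a::field mat"
  assumes "K \<subseteq> {..<dim_col C}" "card K = dim_row C" "det (submatrix C UNIV K) \<noteq> 0"
  shows "full_row_rank C"
proof -
  have C: "C \<in> carrier_mat (dim_row C) (dim_col C)" by simp
  have "card {j. j < dim_col C \<and> j \<in> K} \<le> vec_space.rank (dim_row C) C"
    by (rule vec_space.rank_gt_minor[OF C assms(3)])
  moreover have "{j. j < dim_col C \<and> j \<in> K} = K" using assms(1) by auto
  moreover have "vec_space.rank (dim_row C) C \<le> dim_row C" by (rule vec_space.rank_le_dim_row[OF C])
  ultimately show ?thesis unfolding full_row_rank_def using assms(2) by simp
qed

lemma det_submatrix_singleton:
  assumes "i < dim_row A" "j < dim_col A"
  shows "det (submatrix A {i} {j}) = A $$ (i, j)"
proof -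
  have "pick {i} 0 = i" "pick {j} 0 = j" by (auto intro: Least_equality)
  then have "submatrix A {i} {j} \<in> carrier_mat 1 1" "submatrix A {i} {j} $$ (0, 0) = A $$ (i, j)"
    using submatrix_altdef[of "{i}" A "{j}"] assms by auto
  then show ?thesis using det_single by metis
qed

lemma det_submatrix_laplace_column:
  fixes A :: "'a::comm_ring_1 mat"
  assumes I: "I \<subseteq> {..<dim_row A}" and K: "K \<subseteq> {..<dim_col A}" and card: "card I = card K"
    and j: "j \<in> K"
  defines "t \<equiv> card {a\<in>K. a < j}"
  shows "det (submatrix A I K) = (\<Sum>r<card I. A $$ (pick I r, j) * cofactor (submatrix A I K) r t)"
proof -
  have t: "t < card K" "pick K t = j"
    using card_less_in_set[OF finite_subset[OF K finite_lessThan] j] pick_card_in_set[OF j] t_def by auto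
  have "det (submatrix A I K) = (\<Sum>r<card I. submatrix A I K $$ (r, t) * cofactor (submatrix A I K) r t)"
    by (rule laplace_expansion_column) (use submatrix_carrier[OF I K] card t in auto)
  also have "\<dots> = (\<Sum>r<card I. A $$ (pick I r, j) * cofactor (submatrix A I K) r t)"
    using submatrix_altdef[OF I K] t by (intro sum.cong) auto
  finally show ?thesis .
qed

lemma det_submatrix_zero_column:
  fixes A :: "'a::comm_ring_1 mat"
  assumes I: "I \<subseteq> {..<dim_row A}" and K: "K \<subseteq> {..<dim_col A}" and "card I = card K"
    and "j \<in> K" and zero: "\<And>r. r \<in> I \<Longrightarrow> A $$ (r, j) = 0"
  shows "det (submatrix A I K) = 0"
  unfolding det_submatrix_laplace_column[OF assms(1-4)]
proof (intro sum.neutral ballI)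
  fix r assume "r \<in> {..<card I}"
  then show "A $$ (pick I r, j) * cofactor (submatrix A I K) r (card {a \<in> K. a < j}) = 0"
    using zero[OF pick_in_set_le] by simp
qed

lemma abs_det_submatrix_unit_column:
  fixes A :: "'a::linordered_field mat"
  assumes I: "I \<subseteq> {..<dim_row A}" and K: "K \<subseteq> {..<dim_col A}" and card: "card I = card K"
    and i: "i \<in> I" and j: "j \<in> K" and zero: "\<And>r. r \<in> I \<Longrightarrow> r \<noteq> i \<Longrightarrow> A $$ (r, j) = 0"
  shows "\<bar>det (submatrix A I K)\<bar> = \<bar>A $$ (i, j)\<bar> * \<bar>det (submatrix A (I - {i}) (K - {j}))\<bar>"
proof -
  define s where "s = card {a\<in>I. a < i}"
  define t where "t = card {a\<in>K. a < j}"
  have s: "s < card I" "pick I s = i"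
    using card_less_in_set[OF finite_subset[OF I finite_lessThan] i] pick_card_in_set[OF i] s_def by auto
  have t: "t < card K" "pick K t = j"
    using card_less_in_set[OF finite_subset[OF K finite_lessThan] j] pick_card_in_set[OF j] t_def by auto
  have others: "A $$ (pick I r, j) * cofactor (submatrix A I K) r t = 0" if "r \<in> {..<card I} - {s}" for r
  proof -
    have "pick I r \<noteq> i" using that s inj_on_pick[of I] by (auto simp: inj_on_def)
    then show ?thesis using zero[OF pick_in_set_le] that by auto
  qed
  have rest: "(\<Sum>r\<in>{..<card I} - {s}. A $$ (pick I r, j) * cofactor (submatrix A I K) r t) = 0"
    by (rule sum.neutral) (use others in blast)
  have "det (submatrix A I K) = (\<Sum>r<card I. A $$ (pick I r, j) * cofactor (submatrix A I K) r t)"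
    unfolding t_def by (rule det_submatrix_laplace_column[OF I K card j])
  also have "\<dots> = A $$ (pick I s, j) * cofactor (submatrix A I K) s t +
      (\<Sum>r\<in>{..<card I} - {s}. A $$ (pick I r, j) * cofactor (submatrix A I K) r t)"
    by (rule sum.remove) (use s in auto)
  also have "\<dots> = A $$ (i, j) * cofactor (submatrix A I K) s t"
    using rest s by simp
  finally have "\<bar>det (submatrix A I K)\<bar> = \<bar>A $$ (i, j)\<bar> * \<bar>det (mat_delete (submatrix A I K) s t)\<bar>"
    by (simp add: cofactor_def abs_mult power_abs)
  then show ?thesis using mat_delete_submatrix[OF I K s(1) t(1)] s t by simp
qed

lemma exists_nonzero_minor_delete_row:
  fixes A :: "'a::field mat"
  assumes I: "I \<subseteq> {..<dim_row A}" and K: "K \<subseteq> {..<dim_col A}" and card: "card I = card K"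
    and i: "i \<in> I" and nonzero: "det (submatrix A I K) \<noteq> 0"
  shows "\<exists>l\<in>K. det (submatrix A (I - {i}) (K - {l})) \<noteq> 0"
proof -
  define s where "s = card {a\<in>I. a < i}"
  have s: "s < card I" "pick I s = i"
    using card_less_in_set[OF finite_subset[OF I finite_lessThan] i] pick_card_in_set[OF i] s_def by auto
  have M: "submatrix A I K \<in> carrier_mat (card I) (card I)"
    using submatrix_carrier[OF I K] card by simp
  obtain q where q: "q < card I" "submatrix A I K $$ (s, q) * cofactor (submatrix A I K) s q \<noteq> 0"
    using laplace_expansion_row[OF M s(1)] nonzero by (metis (no_types, lifting) lessThan_iff sum.neutral)
  then have "det (mat_delete (submatrix A I K) s q) \<noteq> 0" unfolding cofactor_def by auto
  moreover have "mat_delete (submatrix A I K) s q = submatrix A (I - {i}) (K - {pick K q})"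
    using mat_delete_submatrix[OF I K s(1)] q card s by simp
  moreover have "pick K q \<in> K" using pick_in_set_le q card by auto
  ultimately show ?thesis by auto
qed

section \<open>Pivots and trims\<close>

lemma det_add_multiples_of_row:
  fixes N :: "'a::comm_ring_1 mat"
  assumes N: "N \<in> carrier_mat n n" and s: "s < n" and R: "R \<subseteq> {..<n} - {s}"
  shows "det (mat n n (\<lambda>(r, c). if r \<in> R then N $$ (r, c) + e r * N $$ (s, c) else N $$ (r, c))) = det N"
proof -
  have "finite R" using R finite_subset by blast
  then show ?thesis using R
  proof (induction R rule: finite_induct)
    case empty
    have "mat n n (\<lambda>(r, c). if r \<in> {} then N $$ (r, c) + e r * N $$ (s, c) else N $$ (r, c)) = N"
      by (rule eq_matI) (use N in auto)
    then show ?case by simp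
  next
    case (insert x F)
    define P where "P = mat n n (\<lambda>(r, c). if r \<in> F then N $$ (r, c) + e r * N $$ (s, c) else N $$ (r, c))"
    have P: "P \<in> carrier_mat n n" unfolding P_def by simp
    have "mat n n (\<lambda>(r, c). if r \<in> insert x F then N $$ (r, c) + e r * N $$ (s, c) else N $$ (r, c))
       = addrow (e x) x s P"
      by (rule eq_matI) (use insert.prems insert.hyps s in \<open>auto simp: P_def mat_addrow_def\<close>)
    moreover have "det (addrow (e x) x s P) = det P"
      by (rule det_addrow[OF s _ P]) (use insert.prems in auto)
    moreover have "det P = det N" unfolding P_def using insert by auto
    ultimately show ?case by simp
  qed
qed

lemma det_pivot_rows:
  fixes M :: "'a::field mat"
  assumes M: "M \<in> carrier_mat n n" and M': "M' \<in> carrier_mat n n" and s: "s < n" and a: "a \<noteq> 0"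
    and entries: "\<And>r c. r < n \<Longrightarrow> c < n \<Longrightarrow>
      M' $$ (r, c) = (if r = s then M $$ (s, c) / a else M $$ (r, c) - d r * (M $$ (s, c) / a))"
  shows "det M' = det M / a"
proof -
  define N where "N = multrow s (1 / a) M"
  have N: "N \<in> carrier_mat n n" unfolding N_def using M by simp
  have N_index: "N $$ (r, c) = (if r = s then M $$ (s, c) / a else M $$ (r, c))" if "r < n" "c < n" for r c
    unfolding N_def using that M by (auto simp: mat_multrow_def)
  have "M' = mat n n (\<lambda>(r, c). if r \<in> {..<n} - {s} then N $$ (r, c) + (- d r) * N $$ (s, c) else N $$ (r, c))"
    by (intro eq_matI) (use M' s in \<open>auto simp: entries N_index\<close>)
  then have "det M' = det N" using det_add_multiples_of_row[OF N s, of "{..<n} - {s}" "\<lambda>r. - d r"] by simp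
  then show ?thesis unfolding N_def using det_multrow[OF s M] by simp
qed

lemma dim_pivot_mat [simp]:
  "dim_row (pivot_mat A i j) = dim_row A" "dim_col (pivot_mat A i j) = dim_col A"
  unfolding pivot_mat_def by auto

lemma pivot_mat_index:
  "k < dim_row A \<Longrightarrow> l < dim_col A \<Longrightarrow> pivot_mat A i j $$ (k, l) =
    (if k = i then A $$ (i, l) / A $$ (i, j) else A $$ (k, l) - A $$ (k, j) * (A $$ (i, l) / A $$ (i, j)))"
  unfolding pivot_mat_def by auto

lemma pivot_mat_pivot_column:
  assumes "is_pivot A i j" "k < dim_row A"
  shows "pivot_mat A i j $$ (k, j) = (if k = i then 1 else 0)"
  using assms unfolding is_pivot_def by (auto simp: pivot_mat_index)

lemma det_submatrix_pivot_mat: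
  fixes A :: "'a::field mat"
  assumes p: "is_pivot A i j" and I: "I \<subseteq> {..<dim_row A}" and K: "K \<subseteq> {..<dim_col A}"
    and card: "card I = card K" and i: "i \<in> I"
  shows "det (submatrix (pivot_mat A i j) I K) = det (submatrix A I K) / A $$ (i, j)"
proof -
  let ?B = "pivot_mat A i j"
  define s where "s = card {a\<in>I. a < i}"
  have s: "s < card I" "pick I s = i"
    using card_less_in_set[OF finite_subset[OF I finite_lessThan] i] pick_card_in_set[OF i] s_def by auto
  have I': "I \<subseteq> {..<dim_row ?B}" and K': "K \<subseteq> {..<dim_col ?B}" using I K by auto
  have M: "submatrix A I K \<in> carrier_mat (card I) (card I)" using submatrix_carrier[OF I K] card by simp
  have M': "submatrix ?B I K \<in> carrier_mat (card I) (card I)" using submatrix_carrier[OF I' K'] card by simp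
  have a: "A $$ (i, j) \<noteq> 0" using p unfolding is_pivot_def by auto
  show ?thesis
  proof (rule det_pivot_rows[OF M M' s(1) a])
    fix r q assume r: "r < card I" and q: "q < card I"
    then have "pick I r \<in> I" "pick K q \<in> K" using pick_in_set_le card by auto
    then have lt: "pick I r < dim_row A" "pick K q < dim_col A" using I K by auto
    have iff: "pick I r = i \<longleftrightarrow> r = s" using inj_on_pick[of I] r s by (auto simp: inj_on_def)
    have B: "submatrix ?B I K $$ (r, q) = ?B $$ (pick I r, pick K q)"
      using submatrix_altdef[OF I' K'] r q card by simp
    have A: "submatrix A I K $$ (r, q) = A $$ (pick I r, pick K q)" "submatrix A I K $$ (s, q) = A $$ (i, pick K q)"
      using submatrix_altdef[OF I K] r q card s by auto
    show "submatrix ?B I K $$ (r, q) = (if r = s then submatrix A I K $$ (s, q) / A $$ (i, j)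
         else submatrix A I K $$ (r, q) - A $$ (pick I r, j) * (submatrix A I K $$ (s, q) / A $$ (i, j)))"
      unfolding A B pivot_mat_index[OF lt] using iff s by auto
  qed
qed

text \<open>Expand along the pivot column, a unit vector after pivoting.\<close>

lemma abs_det_submatrix_pivot_mat_avoiding:
  fixes A :: "'a::linordered_field mat"
  assumes p: "is_pivot A i j" and S: "S \<subseteq> {..<dim_row A}" and K: "K \<subseteq> {..<dim_col A}"
    and card: "card K = card S" and i: "i \<notin> S" and j: "j \<notin> K"
  shows "\<bar>det (submatrix (pivot_mat A i j) S K)\<bar> =
    \<bar>det (submatrix A (insert i S) (insert j K))\<bar> / \<bar>A $$ (i, j)\<bar>"
proof -
  let ?B = "pivot_mat A i j"
  have ij: "i < dim_row A" "j < dim_col A" using p unfolding is_pivot_def by auto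
  have S': "insert i S \<subseteq> {..<dim_row A}" and K': "insert j K \<subseteq> {..<dim_col A}" using S K ij by auto
  have card': "card (insert i S) = card (insert j K)"
    using card i j finite_subset[OF S finite_lessThan] finite_subset[OF K finite_lessThan] by simp
  have "\<bar>det (submatrix ?B (insert i S) (insert j K))\<bar> =
      \<bar>?B $$ (i, j)\<bar> * \<bar>det (submatrix ?B (insert i S - {i}) (insert j K - {j}))\<bar>"
    by (rule abs_det_submatrix_unit_column) (use S' K' card' pivot_mat_pivot_column[OF p] in auto)
  moreover have "insert i S - {i} = S" "insert j K - {j} = K" using i j by auto
  moreover have "?B $$ (i, j) = 1" using pivot_mat_pivot_column[OF p ij(1)] by simp
  moreover have "det (submatrix ?B (insert i S) (insert j K)) =
      det (submatrix A (insert i S) (insert j K)) / A $$ (i, j)"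
    using det_submatrix_pivot_mat[OF p S' K' card'] by simp
  ultimately show ?thesis by simp
qed

lemma trim_mat_eq_submatrix:
  "trim_mat A i j = submatrix (pivot_mat A i j) ({..<dim_row A} - {i}) ({..<dim_col A} - {j})"
proof -
  have "{k. k < dim_row A \<and> k \<in> - {i}} = {..<dim_row A} - {i}"
    "{l. l < dim_col A \<and> l \<in> - {j}} = {..<dim_col A} - {j}" by auto
  then show ?thesis
    using submatrix_restrict[of "pivot_mat A i j" "- {i}" "- {j}"] unfolding trim_mat_def dim_pivot_mat
    by (simp only:)
qed

text \<open>\<open>positions R X\<close> translates a set \<open>X \<subseteq> R\<close> of row (column) indices of a matrix into
  the corresponding indices of its submatrix on the rows (columns) \<open>R\<close>.\<close>

definition positions :: "nat set \<Rightarrow> nat set \<Rightarrow> nat set" where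
  "positions R X = {r\<in>{..<card R}. pick R r \<in> X}"

lemma
  assumes "finite R" "X \<subseteq> R"
  shows image_pick_positions: "pick R ` positions R X = X"
    and card_positions: "card (positions R X) = card X"
    and positions_subset: "positions R X \<subseteq> {..<card R}"
proof -
  have "pick R ` positions R X = pick R ` {..<card R} \<inter> X" unfolding positions_def by auto
  then show image: "pick R ` positions R X = X" using image_pick_lessThan[OF assms(1)] assms(2) by auto
  show "positions R X \<subseteq> {..<card R}" unfolding positions_def by auto
  then show "card (positions R X) = card X" using card_image inj_on_subset[OF inj_on_pick] image by metis
qed

lemma det_submatrix_trim_mat:
  fixes A :: "'a::linordered_field mat"
  assumes p: "is_pivot A i j" and I: "I \<subseteq> {..<dim_row A}" and K: "K \<subseteq> {..<dim_col A}"
    and card: "card I = card K" and i: "i \<in> I" and j: "j \<in> K"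
  defines "I' \<equiv> positions ({..<dim_row A} - {i}) (I - {i})"
    and "K' \<equiv> positions ({..<dim_col A} - {j}) (K - {j})"
  shows "\<bar>det (submatrix A I K)\<bar> = \<bar>A $$ (i, j)\<bar> * \<bar>det (submatrix (trim_mat A i j) I' K')\<bar>"
    and "I' \<subseteq> {..<dim_row (trim_mat A i j)}" "K' \<subseteq> {..<dim_col (trim_mat A i j)}"
    and "card I' = card I - 1" "card K' = card K - 1"
proof -
  let ?B = "pivot_mat A i j"
  let ?R = "{..<dim_row A} - {i}" and ?C = "{..<dim_col A} - {j}"
  have ij: "i < dim_row A" "j < dim_col A" and a: "A $$ (i, j) \<noteq> 0"
    using p unfolding is_pivot_def by auto
  have R: "?R \<subseteq> {..<dim_row ?B}" and C: "?C \<subseteq> {..<dim_col ?B}" by auto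
  have fin: "finite ?R" "finite ?C" by auto
  have IR: "I - {i} \<subseteq> ?R" and KC: "K - {j} \<subseteq> ?C" using I K by auto
  have T: "trim_mat A i j \<in> carrier_mat (card ?R) (card ?C)"
    unfolding trim_mat_eq_submatrix by (rule submatrix_carrier[OF R C])
  show "I' \<subseteq> {..<dim_row (trim_mat A i j)}" "K' \<subseteq> {..<dim_col (trim_mat A i j)}"
    using positions_subset[OF fin(1) IR] positions_subset[OF fin(2) KC] T
    unfolding I'_def K'_def by auto
  show "card I' = card I - 1" "card K' = card K - 1"
    using card_positions[OF fin(1) IR] card_positions[OF fin(2) KC] i j
      finite_subset[OF I finite_lessThan] finite_subset[OF K finite_lessThan]
    unfolding I'_def K'_def by auto
  have "submatrix (trim_mat A i j) I' K' = submatrix ?B (I - {i}) (K - {j})"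
    unfolding trim_mat_eq_submatrix I'_def K'_def
    using submatrix_submatrix[OF R C positions_subset[OF fin(1) IR] positions_subset[OF fin(2) KC]]
      image_pick_positions[OF fin(1) IR] image_pick_positions[OF fin(2) KC] by simp
  moreover have "\<bar>det (submatrix ?B I K)\<bar> = \<bar>?B $$ (i, j)\<bar> * \<bar>det (submatrix ?B (I - {i}) (K - {j}))\<bar>"
    by (rule abs_det_submatrix_unit_column) (use I K card i j pivot_mat_pivot_column[OF p] in auto)
  moreover have "?B $$ (i, j) = 1" using pivot_mat_pivot_column[OF p ij(1)] by simp
  moreover have "det (submatrix ?B I K) = det (submatrix A I K) / A $$ (i, j)"
    by (rule det_submatrix_pivot_mat[OF p I K card i])
  ultimately show "\<bar>det (submatrix A I K)\<bar> = \<bar>A $$ (i, j)\<bar> * \<bar>det (submatrix (trim_mat A i j) I' K')\<bar>"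
    using a by (simp add: field_simps)
qed

text \<open>The exchange property of bases, in terms of minors.\<close>

lemma exists_nonzero_minor_exchange:
  fixes A :: "'a::linordered_field mat"
  assumes I: "I \<subseteq> {..<dim_row A}" and L: "L \<subseteq> {..<dim_col A}" and card: "card L = card I"
    and nonzero: "det (submatrix A I L) \<noteq> 0"
    and p: "is_pivot A i j" and i: "i \<in> I" and j: "j \<notin> L"
  shows "\<exists>l\<in>L. card (insert j (L - {l})) = card I \<and> det (submatrix A I (insert j (L - {l}))) \<noteq> 0"
proof -
  let ?B = "pivot_mat A i j"
  have a: "A $$ (i, j) \<noteq> 0" and ij: "i < dim_row A" "j < dim_col A" using p unfolding is_pivot_def by auto
  have I': "I \<subseteq> {..<dim_row ?B}" and L': "L \<subseteq> {..<dim_col ?B}" using I L by auto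
  have "det (submatrix ?B I L) \<noteq> 0"
    using det_submatrix_pivot_mat[OF p I L card[symmetric] i] nonzero a by simp
  then obtain l where l: "l \<in> L" and nonzero_l: "det (submatrix ?B (I - {i}) (L - {l})) \<noteq> 0"
    using exists_nonzero_minor_delete_row[OF I' L' card[symmetric] i] by blast
  define K where "K = insert j (L - {l})"
  have K: "K \<subseteq> {..<dim_col A}" using L ij unfolding K_def by auto
  have "0 < card L" using l finite_subset[OF L finite_lessThan] card_gt_0_iff by blast
  then have card_K: "card K = card I"
    unfolding K_def using finite_subset[OF L finite_lessThan] j l card by simp
  have "\<bar>det (submatrix ?B I K)\<bar> = \<bar>?B $$ (i, j)\<bar> * \<bar>det (submatrix ?B (I - {i}) (K - {j}))\<bar>"
    by (rule abs_det_submatrix_unit_column) (use I K card_K i pivot_mat_pivot_column[OF p] in \<open>auto simp: K_def\<close>)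
  moreover have "K - {j} = L - {l}" unfolding K_def using j by auto
  moreover have "?B $$ (i, j) = 1" using pivot_mat_pivot_column[OF p ij(1)] by simp
  ultimately have "det (submatrix ?B I K) \<noteq> 0" using nonzero_l by simp
  then have "det (submatrix A I K) \<noteq> 0"
    using det_submatrix_pivot_mat[OF p I K card_K[symmetric] i] by simp
  then show ?thesis using l card_K unfolding K_def by blast
qed

section \<open>Minors with a common row set\<close>

definition uniform_minors :: "'a::linordered_field mat \<Rightarrow> bool" where
  "uniform_minors A \<longleftrightarrow> (\<forall>I K L. I \<subseteq> {..<dim_row A} \<longrightarrow> K \<subseteq> {..<dim_col A} \<longrightarrow>
     L \<subseteq> {..<dim_col A} \<longrightarrow> card K = card I \<longrightarrow> card L = card I \<longrightarrow>
     det (submatrix A I K) \<noteq> 0 \<longrightarrow> det (submatrix A I L) \<noteq> 0 \<longrightarrow>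
     \<bar>det (submatrix A I K)\<bar> = \<bar>det (submatrix A I L)\<bar>)"

lemma uniform_minorsD:
  assumes "uniform_minors A" "I \<subseteq> {..<dim_row A}" "K \<subseteq> {..<dim_col A}" "L \<subseteq> {..<dim_col A}"
    "card K = card I" "card L = card I" "det (submatrix A I K) \<noteq> 0" "det (submatrix A I L) \<noteq> 0"
  shows "\<bar>det (submatrix A I K)\<bar> = \<bar>det (submatrix A I L)\<bar>"
  using assms unfolding uniform_minors_def by blast

lemma totally_equimodular_iff_uniform_minors:
  fixes A :: "'a::linordered_field mat"
  shows "totally_equimodular A \<longleftrightarrow> uniform_minors A"
proof
  assume T: "totally_equimodular A"
  show "uniform_minors A" unfolding uniform_minors_def
  proof (intro allI impI)
    fix I K L assume I: "I \<subseteq> {..<dim_row A}" and K: "K \<subseteq> {..<dim_col A}" and L: "L \<subseteq> {..<dim_col A}"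
      and card: "card K = card I" "card L = card I"
      and nonzero: "det (submatrix A I K) \<noteq> 0" "det (submatrix A I L) \<noteq> 0"
    let ?C = "submatrix A I UNIV"
    note dim = dim_submatrix_rows[OF I]
    have "full_row_rank ?C"
      by (rule full_row_rank_if_det_submatrix_nonzero[of K])
        (use K card dim nonzero submatrix_rows_cols[OF I K] in auto)
    then have "equimodular ?C" using T I unfolding totally_equimodular_def by blast
    then have "\<bar>det (submatrix ?C UNIV K)\<bar> = \<bar>det (submatrix ?C UNIV L)\<bar>"
      by (rule equimodular_def[THEN iffD1, THEN conjunct2, rule_format])
        (use K L card dim nonzero submatrix_rows_cols[OF I K] submatrix_rows_cols[OF I L] in auto)
    then show "\<bar>det (submatrix A I K)\<bar> = \<bar>det (submatrix A I L)\<bar>"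
      using submatrix_rows_cols[OF I K] submatrix_rows_cols[OF I L] by simp
  qed
next
  assume U: "uniform_minors A"
  show "totally_equimodular A" unfolding totally_equimodular_def equimodular_def
  proof (intro allI impI conjI)
    fix I J K assume I: "I \<subseteq> {..<dim_row A}"
      and J: "J \<subseteq> {..<dim_col (submatrix A I UNIV)}" and K: "K \<subseteq> {..<dim_col (submatrix A I UNIV)}"
      and card: "card J = dim_row (submatrix A I UNIV)" "card K = dim_row (submatrix A I UNIV)"
      and nonzero: "det (submatrix (submatrix A I UNIV) UNIV J) \<noteq> 0"
        "det (submatrix (submatrix A I UNIV) UNIV K) \<noteq> 0"
    note dim = dim_submatrix_rows[OF I]
    have J': "J \<subseteq> {..<dim_col A}" and K': "K \<subseteq> {..<dim_col A}" using J K dim by auto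
    show "\<bar>det (submatrix (submatrix A I UNIV) UNIV J)\<bar> = \<bar>det (submatrix (submatrix A I UNIV) UNIV K)\<bar>"
      unfolding submatrix_rows_cols[OF I J'] submatrix_rows_cols[OF I K']
      by (rule uniform_minorsD[OF U I J' K'])
        (use card dim nonzero submatrix_rows_cols[OF I J'] submatrix_rows_cols[OF I K'] in auto)
  qed
qed

lemma uniform_minors_pivot_mat:
  fixes A :: "'a::linordered_field mat"
  assumes U: "uniform_minors A" and p: "is_pivot A i j"
  shows "uniform_minors (pivot_mat A i j)"
  unfolding uniform_minors_def
proof (intro allI impI)
  let ?B = "pivot_mat A i j"
  fix S K L assume S: "S \<subseteq> {..<dim_row ?B}" and K: "K \<subseteq> {..<dim_col ?B}" and L: "L \<subseteq> {..<dim_col ?B}"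
    and card: "card K = card S" "card L = card S"
    and nonzero: "det (submatrix ?B S K) \<noteq> 0" "det (submatrix ?B S L) \<noteq> 0"
  have S': "S \<subseteq> {..<dim_row A}" and K': "K \<subseteq> {..<dim_col A}" and L': "L \<subseteq> {..<dim_col A}"
    using S K L by auto
  have ij: "i < dim_row A" "j < dim_col A" and a: "A $$ (i, j) \<noteq> 0"
    using p unfolding is_pivot_def by auto
  show "\<bar>det (submatrix ?B S K)\<bar> = \<bar>det (submatrix ?B S L)\<bar>"
  proof (cases "i \<in> S")
    case True
    have BK: "det (submatrix ?B S K) = det (submatrix A S K) / A $$ (i, j)"
      using det_submatrix_pivot_mat[OF p S' K' _ True] card by simp
    have BL: "det (submatrix ?B S L) = det (submatrix A S L) / A $$ (i, j)"
      using det_submatrix_pivot_mat[OF p S' L' _ True] card by simp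
    have "\<bar>det (submatrix A S K)\<bar> = \<bar>det (submatrix A S L)\<bar>"
      by (rule uniform_minorsD[OF U S' K' L' card]) (use nonzero BK BL in auto)
    then show ?thesis unfolding BK BL by simp
  next
    case False
    have zero: "\<And>r. r \<in> S \<Longrightarrow> ?B $$ (r, j) = 0" using pivot_mat_pivot_column[OF p] S' False by auto
    have j: "j \<notin> K" "j \<notin> L"
      using det_submatrix_zero_column[OF S K _ _ zero] det_submatrix_zero_column[OF S L _ _ zero]
        card nonzero by auto
    note BK = abs_det_submatrix_pivot_mat_avoiding[OF p S' K' card(1) False j(1)]
    note BL = abs_det_submatrix_pivot_mat_avoiding[OF p S' L' card(2) False j(2)]
    have "insert i S \<subseteq> {..<dim_row A}" "insert j K \<subseteq> {..<dim_col A}" "insert j L \<subseteq> {..<dim_col A}"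
      using S' K' L' ij by auto
    moreover have "card (insert j K) = card (insert i S)" "card (insert j L) = card (insert i S)"
      using False j card finite_subset[OF S' finite_lessThan] finite_subset[OF K' finite_lessThan]
        finite_subset[OF L' finite_lessThan] by auto
    ultimately have "\<bar>det (submatrix A (insert i S) (insert j K))\<bar> = \<bar>det (submatrix A (insert i S) (insert j L))\<bar>"
      by (rule uniform_minorsD[OF U]) (use nonzero BK BL in auto)
    then show ?thesis unfolding BK BL by simp
  qed
qed

lemma uniform_minors_submatrix:
  fixes B :: "'a::linordered_field mat"
  assumes U: "uniform_minors B" and R: "R \<subseteq> {..<dim_row B}" and C: "C \<subseteq> {..<dim_col B}"
  shows "uniform_minors (submatrix B R C)"
  unfolding uniform_minors_def
proof (intro allI impI)
  let ?T = "submatrix B R C"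
  fix S K L assume S: "S \<subseteq> {..<dim_row ?T}" and K: "K \<subseteq> {..<dim_col ?T}" and L: "L \<subseteq> {..<dim_col ?T}"
    and card: "card K = card S" "card L = card S"
    and nonzero: "det (submatrix ?T S K) \<noteq> 0" "det (submatrix ?T S L) \<noteq> 0"
  have S': "S \<subseteq> {..<card R}" and K': "K \<subseteq> {..<card C}" and L': "L \<subseteq> {..<card C}"
    using S K L submatrix_carrier[OF R C] by auto
  have "inj_on (pick R) S" "inj_on (pick C) K" "inj_on (pick C) L"
    using inj_on_pick S' K' L' inj_on_subset by blast+
  then have card_image: "card (pick R ` S) = card S" "card (pick C ` K) = card K" "card (pick C ` L) = card L"
    by (simp_all add: card_image)
  have "pick R ` S \<subseteq> {..<dim_row B}" "pick C ` K \<subseteq> {..<dim_col B}" "pick C ` L \<subseteq> {..<dim_col B}"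
    using R C S' K' L' pick_in_set_le by fastforce+
  then show "\<bar>det (submatrix ?T S K)\<bar> = \<bar>det (submatrix ?T S L)\<bar>"
    unfolding submatrix_submatrix[OF R C S' K'] submatrix_submatrix[OF R C S' L']
    by (rule uniform_minorsD[OF U])
      (use card_image card nonzero submatrix_submatrix[OF R C S' K'] submatrix_submatrix[OF R C S' L'] in auto)
qed

lemma uniform_minors_pivot_trim_step:
  fixes A :: "'a::linordered_field mat"
  assumes U: "uniform_minors A" and step: "pivot_trim_step A B"
  shows "uniform_minors B"
proof -
  obtain i j where p: "is_pivot A i j" and B: "B = pivot_mat A i j \<or> B = trim_mat A i j"
    using step unfolding pivot_trim_step_def by blast
  have P: "uniform_minors (pivot_mat A i j)" by (rule uniform_minors_pivot_mat[OF U p])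
  show ?thesis using B
  proof
    assume "B = trim_mat A i j"
    then show ?thesis unfolding trim_mat_eq_submatrix using uniform_minors_submatrix[OF P] by auto
  qed (use P in simp)
qed

lemma uniform_minors_imp_essentially_01:
  fixes A :: "'a::linordered_field mat"
  assumes U: "uniform_minors A"
  shows "essentially_01 A"
  unfolding essentially_01_def
proof (intro allI impI)
  fix i j k assume i: "i < dim_row A" and j: "j < dim_col A" and k: "k < dim_col A"
    and nonzero: "A $$ (i, j) \<noteq> 0" "A $$ (i, k) \<noteq> 0"
  have "\<bar>det (submatrix A {i} {j})\<bar> = \<bar>det (submatrix A {i} {k})\<bar>"
    by (rule uniform_minorsD[OF U])
      (use i j k nonzero det_submatrix_singleton[OF i j] det_submatrix_singleton[OF i k] in auto)
  then show "\<bar>A $$ (i, j)\<bar> = \<bar>A $$ (i, k)\<bar>"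
    using det_submatrix_singleton[OF i j] det_submatrix_singleton[OF i k] by simp
qed

section \<open>Matrices that stay essentially 0,+-1 under pivots and trims\<close>

definition hereditarily_01 :: "'a::linordered_field mat \<Rightarrow> bool" where
  "hereditarily_01 A \<longleftrightarrow> (\<forall>B. pivot_trim_step\<^sup>*\<^sup>* A B \<longrightarrow> essentially_01 B)"

lemma uniform_minors_imp_hereditarily_01:
  fixes A :: "'a::linordered_field mat"
  assumes "uniform_minors A"
  shows "hereditarily_01 A"
  unfolding hereditarily_01_def
proof (intro allI impI)
  fix B assume "pivot_trim_step\<^sup>*\<^sup>* A B"
  then have "uniform_minors B" using assms by induction (auto intro: uniform_minors_pivot_trim_step)
  then show "essentially_01 B" by (rule uniform_minors_imp_essentially_01)
qed

lemma hereditarily_01_step: "hereditarily_01 A \<Longrightarrow> pivot_trim_step A B \<Longrightarrow> hereditarily_01 B"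
  unfolding hereditarily_01_def by (meson converse_rtranclp_into_rtranclp)

lemma hereditarily_01_imp_essentially_01: "hereditarily_01 A \<Longrightarrow> essentially_01 A"
  unfolding hereditarily_01_def by blast

lemma exists_pivot_in_column:
  fixes A :: "'a::field mat"
  assumes I: "I \<subseteq> {..<dim_row A}" and K: "K \<subseteq> {..<dim_col A}" and "card I = card K" and j: "j \<in> K"
    and "det (submatrix A I K) \<noteq> 0"
  obtains i where "i \<in> I" "is_pivot A i j"
proof -
  obtain i where "i \<in> I" "A $$ (i, j) \<noteq> 0" using det_submatrix_zero_column[OF assms(1-4)] assms(5) by blast
  moreover have "i < dim_row A" "j < dim_col A" using I K j \<open>i \<in> I\<close> by auto
  ultimately show ?thesis using that unfolding is_pivot_def by blast
qed

lemma exists_minor_meeting_both: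
  fixes A :: "'a::linordered_field mat"
  assumes I: "I \<subseteq> {..<dim_row A}" and K: "K \<subseteq> {..<dim_col A}" and L: "L \<subseteq> {..<dim_col A}"
    and card: "card K = card I" "card L = card I"
    and nonzero: "det (submatrix A I K) \<noteq> 0" "det (submatrix A I L) \<noteq> 0"
    and disjoint: "K \<inter> L = {}" and two: "2 \<le> card I"
  obtains M where "M \<subseteq> {..<dim_col A}" "card M = card I" "det (submatrix A I M) \<noteq> 0"
    "M \<inter> K \<noteq> {}" "M \<inter> L \<noteq> {}"
proof -
  have "K \<noteq> {}" using card two by auto
  then obtain j where j: "j \<in> K" by blast
  obtain i where i: "i \<in> I" and p: "is_pivot A i j"
    using exists_pivot_in_column[OF I K card(1)[symmetric] j nonzero(1)] .
  have "j \<notin> L" using disjoint j by blast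
  then obtain l where l: "l \<in> L" and "card (insert j (L - {l})) = card I"
    and "det (submatrix A I (insert j (L - {l}))) \<noteq> 0"
    using exists_nonzero_minor_exchange[OF I L card(2) nonzero(2) p i] by blast
  moreover have "insert j (L - {l}) \<subseteq> {..<dim_col A}" using K L j by auto
  moreover have "L \<noteq> {l}" using card(2) two by auto
  ultimately show ?thesis using that[of "insert j (L - {l})"] j l by blast
qed

lemma hereditarily_01_minors_eq:
  fixes A :: "'a::linordered_field mat"
  assumes "hereditarily_01 A" "I \<subseteq> {..<dim_row A}" "K \<subseteq> {..<dim_col A}" "L \<subseteq> {..<dim_col A}"
    "card K = card I" "card L = card I" "det (submatrix A I K) \<noteq> 0" "det (submatrix A I L) \<noteq> 0"
  shows "\<bar>det (submatrix A I K)\<bar> = \<bar>det (submatrix A I L)\<bar>"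
  using assms
proof (induction "card I" arbitrary: A I K L)
  case 0
  have "finite K" "finite L" using "0.prems" finite_subset by blast+
  then have "K = {}" "L = {}" using "0.prems" "0.hyps" by auto
  then show ?case by simp
next
  case (Suc k)
  note H = Suc.prems(1) and I = Suc.prems(2)
  have overlapping: "\<bar>det (submatrix A I K)\<bar> = \<bar>det (submatrix A I L)\<bar>"
    if K: "K \<subseteq> {..<dim_col A}" and L: "L \<subseteq> {..<dim_col A}" and card: "card K = card I" "card L = card I"
      and nonzero: "det (submatrix A I K) \<noteq> 0" "det (submatrix A I L) \<noteq> 0"
      and j: "j \<in> K" "j \<in> L" for K L j
  proof -
    obtain i where i: "i \<in> I" and p: "is_pivot A i j"
      using exists_pivot_in_column[OF I K card(1)[symmetric] j(1) nonzero(1)] .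
    have H': "hereditarily_01 (trim_mat A i j)"
      using hereditarily_01_step[OF H] p unfolding pivot_trim_step_def by blast
    let ?T = "trim_mat A i j" and ?I = "positions ({..<dim_row A} - {i}) (I - {i})"
    let ?K = "positions ({..<dim_col A} - {j}) (K - {j})" and ?L = "positions ({..<dim_col A} - {j}) (L - {j})"
    note trim_K = det_submatrix_trim_mat[OF p I K card(1)[symmetric] i j(1)]
    note trim_L = det_submatrix_trim_mat[OF p I L card(2)[symmetric] i j(2)]
    have "\<bar>det (submatrix ?T ?I ?K)\<bar> = \<bar>det (submatrix ?T ?I ?L)\<bar>"
    proof (rule Suc.hyps(1)[OF _ H' trim_K(2) trim_K(3) trim_L(3)])
      show "k = card ?I" using trim_K(4) Suc.hyps(2) by simp
      show "card ?K = card ?I" using trim_K(4,5) card(1) by simp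
      show "card ?L = card ?I" using trim_K(4) trim_L(5) card(2) by simp
      show "det (submatrix ?T ?I ?K) \<noteq> 0" using trim_K(1) nonzero(1) by auto
      show "det (submatrix ?T ?I ?L) \<noteq> 0" using trim_L(1) nonzero(2) by auto
    qed
    then show ?thesis using trim_K(1) trim_L(1) by simp
  qed
  note K = Suc.prems(3) and L = Suc.prems(4) and card = Suc.prems(5,6) and nonzero = Suc.prems(7,8)
  show ?case
  proof (cases "K \<inter> L = {}")
    case False
    then obtain j where "j \<in> K" "j \<in> L" by blast
    then show ?thesis by (rule overlapping[OF K L card nonzero])
  next
    case disjoint: True
    show ?thesis
    proof (cases "k = 0")
      case True
      then have "card I = 1" "card K = 1" "card L = 1" using Suc.hyps(2) card by auto
      then obtain i j l where e: "I = {i}" "K = {j}" "L = {l}" by (metis card_1_singletonE)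
      then have ijl: "i < dim_row A" "j < dim_col A" "l < dim_col A" using I K L by auto
      note singleton = det_submatrix_singleton[OF ijl(1,2)] det_submatrix_singleton[OF ijl(1,3)]
      have "\<bar>A $$ (i, j)\<bar> = \<bar>A $$ (i, l)\<bar>"
        by (rule hereditarily_01_imp_essentially_01[OF H, unfolded essentially_01_def, rule_format, OF ijl])
          (use nonzero e singleton in simp_all)
      then show ?thesis using e singleton by simp
    next
      case False
      then have "2 \<le> card I" using Suc.hyps(2) by simp
      then obtain M where M: "M \<subseteq> {..<dim_col A}" "card M = card I" "det (submatrix A I M) \<noteq> 0"
        and meets: "M \<inter> K \<noteq> {}" "M \<inter> L \<noteq> {}"
        using exists_minor_meeting_both[OF I K L card nonzero disjoint] by blast
      obtain j m where "j \<in> K" "j \<in> M" "m \<in> M" "m \<in> L" using meets by blast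
      then show ?thesis
        using overlapping[OF K M(1) card(1) M(2) nonzero(1) M(3)] overlapping[OF M(1) L M(2) card(2) M(3) nonzero(2)]
        by simp
    qed
  qed
qed

lemma hereditarily_01_imp_uniform_minors:
  fixes A :: "'a::linordered_field mat"
  assumes "hereditarily_01 A"
  shows "uniform_minors A"
  unfolding uniform_minors_def using hereditarily_01_minors_eq[OF assms] by blast

theorem mainTheorem1:
  fixes A :: "rat mat"
  shows "totally_equimodular A \<longleftrightarrow>
    (\<forall>B. pivot_trim_step\<^sup>*\<^sup>* A B \<longrightarrow> essentially_01 B)"
  unfolding totally_equimodular_iff_uniform_minors hereditarily_01_def[symmetric]
  using uniform_minors_imp_hereditarily_01 hereditarily_01_imp_uniform_minors by blast

end
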